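(* Let $i \geq 1$ be an integer and for $k \in \{1, 2, \dots, 3^i\}$ let $P^k_{C_i} = \left(\frac{k-1}{3^i}, \frac{k}{3^i}\right)$. If $m, n, s \in \{1, \dots, 3^i\}$ satisfy $s = \frac{1}{2}(m+n)$, then $P^s_{C_i} \subset M_{P^m_{C_i} \cup P^n_{C_i}}$.
   Context: For a set $A \subset \mathbb{R}$, the midpoint set of $A$ is $M_A := \left\{\frac{x+y}{2} : x, y \in A,\ x \neq y\right\}$. *)

theory Defs
  imports Complex_Main
begin

definition midpoint_set :: "real set \<Rightarrow> real set" where
  "midpoint_set A = {(x + y) / 2 | x y. x \<in> A \<and> y \<in> A \<and> x \<noteq> y}"

definition P_C :: "nat \<Rightarrow> nat \<Rightarrow> real set" where
  "P_C i k = {(real k - 1) / 3 ^ i <..< real k / 3 ^ i}"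

end

theory Submission
  imports Defs
begin

text \<open>The three intervals are translates of one another, so a point \<open>z\<close> of \<open>P\<^sup>s\<close> is the
  midpoint of its translates into \<open>P\<^sup>m\<close> and \<open>P\<^sup>n\<close>. These coincide when \<open>m = n\<close>; then
  \<open>z\<close> is instead the midpoint of two nearby points of the open interval \<open>P\<^sup>s\<close>.\<close>

lemma open_subset_midpoint_set:
  assumes "open A"
  shows "A \<subseteq> midpoint_set A"
proof
  fix z assume "z \<in> A"
  then obtain e :: real where e: "e > 0" and ball: "\<And>y. dist y z < e \<Longrightarrow> y \<in> A"
    using assms by (auto simp: open_dist)
  have "z - e / 2 \<in> A" "z + e / 2 \<in> A"
    using e by (auto intro!: ball simp: dist_real_def)
  moreover have "z = ((z - e / 2) + (z + e / 2)) / 2" "z - e / 2 \<noteq> z + e / 2"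
    using e by auto
  ultimately show "z \<in> midpoint_set A"
    unfolding midpoint_set_def by blast
qed

lemma midpoint_translate_subset_midpoint_set:
  fixes a b u v :: real
  shows "{(a + b) / 2 + u <..< (a + b) / 2 + v}
           \<subseteq> midpoint_set ({a + u <..< a + v} \<union> {b + u <..< b + v})"
proof (cases "a = b")
  case True
  then show ?thesis
    using open_subset_midpoint_set[of "{a + u <..< a + v}"] by simp
next
  case False
  show ?thesis
  proof
    fix z assume z: "z \<in> {(a + b) / 2 + u <..< (a + b) / 2 + v}"
    define w where "w = z - (a + b) / 2"
    have "a + w \<in> {a + u <..< a + v}" "b + w \<in> {b + u <..< b + v}"
      using z by (auto simp: w_def)
    moreover have "z = ((a + w) + (b + w)) / 2" "a + w \<noteq> b + w"
      using False by (auto simp: w_def field_simps)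
    ultimately show "z \<in> midpoint_set ({a + u <..< a + v} \<union> {b + u <..< b + v})"
      unfolding midpoint_set_def by blast
  qed
qed

lemma P_C_eq_translate: "P_C i k = {real k / 3 ^ i + - (1 / 3 ^ i) <..< real k / 3 ^ i + 0}"
  by (simp add: P_C_def diff_divide_distrib)

theorem lemma2p4:
  fixes i m n s :: nat
  assumes "i \<ge> 1"
    and "m \<in> {1..3 ^ i}" and "n \<in> {1..3 ^ i}" and "s \<in> {1..3 ^ i}"
    and "real s = (real m + real n) / 2"
  shows "P_C i s \<subseteq> midpoint_set (P_C i m \<union> P_C i n)"
proof -
  have "real s / 3 ^ i = (real m / 3 ^ i + real n / 3 ^ i) / 2"
    using assms(5) by (simp add: add_divide_distrib)
  then show ?thesis
    unfolding P_C_eq_translate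
    using midpoint_translate_subset_midpoint_set[of "real m / 3 ^ i" "real n / 3 ^ i"]
    by presburger
qed

end
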